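(* Let $(\Gamma,\mu)$ be a weighted graph such that $\mu_{xy}\ge1$ whenever $x\sim y$. Let $x\in\Gamma$, $r>0$ and $A>0$ satisfy $V(x,r)\ge r^2/A$, and let $t=r^3$. Then $$q_{2t}(x,x)\le\frac{2(A\vee1)}{r^2}=\frac{2(A\vee1)}{t^{2/3}}.$$
   Context: A weighted graph $(\Gamma,\mu)$ is an infinite, connected, locally finite graph $\Gamma$ with a symmetric function $\mu_{xy}\ge0$ on $\Gamma\times\Gamma$ such that $\mu_{xy}>0$ iff $x\sim y$ (i.e. $x,y$ adjacent). Set $\mu_x=\sum_y\mu_{xy}$, $\mu(A)=\sum_{x\in A}\mu_x$; $d$ is the graph distance, $B(x,r)=\{y:d(x,y)\le r\}$, $V(x,r)=\mu(B(x,r))$. $Y$ is the continuous-time random walk with generator $\mathcal Lf(x)=\mu_x^{-1}\sum_y\mu_{xy}(f(y)-f(x))$ and $q_t(x,y)=P^x(Y_t=y)/\mu_y$. *)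

theory Defs
  imports "HOL-Analysis.Analysis"
begin

definition adj :: "('a \<Rightarrow> 'a \<Rightarrow> real) \<Rightarrow> ('a \<times> 'a) set" where
  "adj \<mu> = {(x, y). \<mu> x y > 0}"

definition nbrs :: "('a \<Rightarrow> 'a \<Rightarrow> real) \<Rightarrow> 'a \<Rightarrow> 'a set" where
  "nbrs \<mu> x = {y. \<mu> x y > 0}"

definition weighted_graph :: "('a \<Rightarrow> 'a \<Rightarrow> real) \<Rightarrow> bool" where
  "weighted_graph \<mu> \<longleftrightarrow>
     infinite (UNIV :: 'a set)
   \<and> (\<forall>x y. \<mu> x y = \<mu> y x)
   \<and> (\<forall>x y. \<mu> x y \<ge> 0)
   \<and> (\<forall>x. finite (nbrs \<mu> x))
   \<and> (\<forall>x y. (x, y) \<in> (adj \<mu>)\<^sup>*)"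

definition vweight :: "('a \<Rightarrow> 'a \<Rightarrow> real) \<Rightarrow> 'a \<Rightarrow> real" where
  "vweight \<mu> x = (\<Sum>y\<in>nbrs \<mu> x. \<mu> x y)"

definition gdist :: "('a \<Rightarrow> 'a \<Rightarrow> real) \<Rightarrow> 'a \<Rightarrow> 'a \<Rightarrow> nat" where
  "gdist \<mu> x y = (LEAST n. (x, y) \<in> adj \<mu> ^^ n)"

definition ball_g :: "('a \<Rightarrow> 'a \<Rightarrow> real) \<Rightarrow> 'a \<Rightarrow> real \<Rightarrow> 'a set" where
  "ball_g \<mu> x r = {y. real (gdist \<mu> x y) \<le> r}"

definition vol :: "('a \<Rightarrow> 'a \<Rightarrow> real) \<Rightarrow> 'a \<Rightarrow> real \<Rightarrow> real" where
  "vol \<mu> x r = (\<Sum>y\<in>ball_g \<mu> x r. vweight \<mu> y)"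

fun pstep :: "('a \<Rightarrow> 'a \<Rightarrow> real) \<Rightarrow> nat \<Rightarrow> 'a \<Rightarrow> 'a \<Rightarrow> real" where
  "pstep \<mu> 0 x y = (if x = y then 1 else 0)"
| "pstep \<mu> (Suc n) x y = (\<Sum>z\<in>nbrs \<mu> x. \<mu> x z / vweight \<mu> x * pstep \<mu> n z y)"

text \<open>Continuous-time random walk with generator
  L f(x) = mu_x^-1 sum_y mu_xy (f y - f x): the jump chain run with
  rate-1 exponential holding times, so
  P^x(Y_t = y) = sum_n e^-t t^n / n! P^n(x,y).\<close>
definition trans_prob :: "('a \<Rightarrow> 'a \<Rightarrow> real) \<Rightarrow> real \<Rightarrow> 'a \<Rightarrow> 'a \<Rightarrow> real" where
  "trans_prob \<mu> t x y = (\<Sum>n. exp (- t) * t ^ n / fact n * pstep \<mu> n x y)"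

definition heat_kernel :: "('a \<Rightarrow> 'a \<Rightarrow> real) \<Rightarrow> real \<Rightarrow> 'a \<Rightarrow> 'a \<Rightarrow> real" where
  "heat_kernel \<mu> t x y = trans_prob \<mu> t x y / vweight \<mu> y"

end

theory Submission
  imports Defs
begin

text \<open>
  Y is the jump chain run at the arrival times of a rate-1 Poisson process, so q_s(x,y) is the
  Poisson transform at s of n |-> P^n(x,y)/mu_y.  Let a(n) = P^n(x,x)/mu_x, h = q_s(x,.) and
  q = q_s(x,x).  By reversibility the energy E(h) is the Poisson transform of a(n) - a(n+1) at
  2s, i.e. minus the derivative of u |-> q_u(x,x) at u = 2s.  This function is nonnegative and
  convex (its second derivative is the Poisson transform of a positive definite Hankel
  sequence), so s E(h) <= q.  Along a shortest path, Cauchy-Schwarz and mu_yz >= 1 give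
  |h(x) - h(y)|^2 <= d(x,y) E(h), hence q_s(x,y) >= q - (r q/s)^(1/2) on B(x,r).  Integrating
  against mu over the ball, whose total transition probability is at most 1, gives
  V(x,r) q <= 1 + V(x,r) (r q/s)^(1/2); for s = 2 r^3 and V(x,r) >= r^2/A this solves to
  q <= 2 max(A, 1)/r^2.
\<close>

section \<open>Poisson transforms\<close>

definition poisson_weight :: "real \<Rightarrow> nat \<Rightarrow> real" where
  "poisson_weight u n = exp (- u) * u ^ n / fact n"

definition poisson_transform :: "(nat \<Rightarrow> real) \<Rightarrow> real \<Rightarrow> real" where
  "poisson_transform d u = (\<Sum>n. poisson_weight u n * d n)"

definition fwd_diff :: "(nat \<Rightarrow> real) \<Rightarrow> nat \<Rightarrow> real" where
  "fwd_diff d n = d (Suc n) - d n"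

lemma fwd_diff_bounded:
  assumes "\<And>n. \<bar>d n\<bar> \<le> B"
  shows "\<bar>fwd_diff d n\<bar> \<le> 2 * B"
  using assms[of n] assms[of "Suc n"] unfolding fwd_diff_def by linarith

lemma poisson_weight_nonneg: "u \<ge> 0 \<Longrightarrow> poisson_weight u n \<ge> 0"
  by (simp add: poisson_weight_def)

lemma poisson_weight_sums: "poisson_weight u sums 1"
proof -
  have "(\<lambda>n. exp (- u) * (u ^ n /\<^sub>R fact n)) sums (exp (- u) * exp u)"
    by (rule sums_mult[OF exp_converges])
  moreover have "poisson_weight u = (\<lambda>n. exp (- u) * (u ^ n /\<^sub>R fact n))"
    by (simp add: poisson_weight_def fun_eq_iff field_simps)
  ultimately show ?thesis
    by (simp add: exp_minus)
qed

lemma poisson_weight_convolution: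
  "(\<Sum>i\<le>n. poisson_weight u i * poisson_weight u (n - i)) = poisson_weight (2 * u) n"
proof -
  have "(\<Sum>i\<le>n. poisson_weight u i * poisson_weight u (n - i))
      = exp (- u) * exp (- u) * (\<Sum>i\<le>n. (u ^ i /\<^sub>R fact i) * (u ^ (n - i) /\<^sub>R fact (n - i)))"
    by (simp add: poisson_weight_def sum_distrib_left field_simps)
  also have "\<dots> = exp (- u) * exp (- u) * ((u + u) ^ n /\<^sub>R fact n)"
    by (simp only: exp_series_add_commuting[of u u n, OF refl])
  also have "\<dots> = poisson_weight (2 * u) n"
    by (simp add: poisson_weight_def exp_add[symmetric] field_simps mult_2)
  finally show ?thesis .
qed

lemma summable_bounded_exp_series:
  fixes d :: "nat \<Rightarrow> real"
  assumes "\<And>n. \<bar>d n\<bar> \<le> B"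
  shows "summable (\<lambda>n. d n / fact n * u ^ n)"
proof (rule summable_comparison_test')
  show "summable (\<lambda>n. B * (inverse (fact n) * \<bar>u\<bar> ^ n))"
    by (rule summable_mult[OF summable_exp])
  fix n
  have "\<bar>d n\<bar> * (inverse (fact n) * \<bar>u\<bar> ^ n) \<le> B * (inverse (fact n) * \<bar>u\<bar> ^ n)"
    by (rule mult_right_mono[OF assms]) simp
  then show "norm (d n / fact n * u ^ n) \<le> B * (inverse (fact n) * \<bar>u\<bar> ^ n)"
    by (simp add: abs_mult power_abs divide_inverse mult_ac)
qed

lemma poisson_weighted_sums:
  assumes "\<And>n. \<bar>d n\<bar> \<le> B"
  shows "(\<lambda>n. poisson_weight u n * d n) sums (exp (- u) * (\<Sum>n. d n / fact n * u ^ n))"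
proof -
  have "(\<lambda>n. exp (- u) * (d n / fact n * u ^ n)) sums (exp (- u) * (\<Sum>n. d n / fact n * u ^ n))"
    by (intro sums_mult summable_sums summable_bounded_exp_series[OF assms])
  then show ?thesis
    by (simp add: poisson_weight_def field_simps)
qed

lemma summable_poisson_weighted:
  assumes "\<And>n. \<bar>d n\<bar> \<le> B"
  shows "summable (\<lambda>n. poisson_weight u n * d n)"
  using poisson_weighted_sums[OF assms] by (rule sums_summable)

lemma poisson_transform_exp_series:
  assumes "\<And>n. \<bar>d n\<bar> \<le> B"
  shows "poisson_transform d u = exp (- u) * (\<Sum>n. d n / fact n * u ^ n)"
  unfolding poisson_transform_def using poisson_weighted_sums[OF assms]
  by (rule sums_unique[symmetric])

lemma poisson_transform_const [simp]: "poisson_transform (\<lambda>_. c) u = c"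
  unfolding poisson_transform_def using sums_mult2[OF poisson_weight_sums[of u], of c]
  by (simp add: sums_iff)

lemma poisson_transform_uminus:
  assumes "\<And>n. \<bar>d n\<bar> \<le> B"
  shows "poisson_transform (\<lambda>n. - d n) u = - poisson_transform d u"
  unfolding poisson_transform_def using suminf_minus[OF summable_poisson_weighted[OF assms]] by simp

lemma poisson_transform_mono:
  assumes "\<And>n. \<bar>d n\<bar> \<le> B" "\<And>n. \<bar>e n\<bar> \<le> C" "\<And>n. d n \<le> e n" "u \<ge> 0"
  shows "poisson_transform d u \<le> poisson_transform e u"
  unfolding poisson_transform_def
  by (intro suminf_le summable_poisson_weighted[OF assms(1)] summable_poisson_weighted[OF assms(2)]
      mult_left_mono assms(3) poisson_weight_nonneg assms(4))

lemma poisson_transform_nonneg: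
  assumes "\<And>n. \<bar>d n\<bar> \<le> B" "\<And>n. d n \<ge> 0" "u \<ge> 0"
  shows "poisson_transform d u \<ge> 0"
  using poisson_transform_mono[of "\<lambda>_. 0" 0 d B u] assms by simp

lemma poisson_transform_sum:
  assumes "\<And>y n. y \<in> Y \<Longrightarrow> \<bar>d y n\<bar> \<le> B"
  shows "poisson_transform (\<lambda>n. \<Sum>y\<in>Y. d y n) u = (\<Sum>y\<in>Y. poisson_transform (d y) u)"
  unfolding poisson_transform_def sum_distrib_left
  by (rule suminf_sum) (rule summable_poisson_weighted[OF assms])

lemma poisson_transform_has_derivative:
  assumes "\<And>n. \<bar>d n\<bar> \<le> B"
  shows "(poisson_transform d has_real_derivative poisson_transform (fwd_diff d) u) (at u)"
proof -
  define c where "c n = d n / fact n" for n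
  have c: "summable (\<lambda>n. c n * v ^ n)" for v
    unfolding c_def by (rule summable_bounded_exp_series[OF assms])
  have diffs_c: "diffs c n = d (Suc n) / fact n" for n
    by (simp add: diffs_def c_def field_simps del: of_nat_Suc)
  have diffs: "summable (\<lambda>n. diffs c n * v ^ n)" for v
    unfolding diffs_c using assms by (rule summable_bounded_exp_series)
  have "((\<lambda>v. exp (- v) * (\<Sum>n. c n * v ^ n)) has_real_derivative
      exp (- u) * ((\<Sum>n. diffs c n * u ^ n) - (\<Sum>n. c n * u ^ n))) (at u)"
    by (auto intro!: derivative_eq_intros termdiffs_strong_converges_everywhere[OF c]
        simp: algebra_simps)
  moreover have "(\<Sum>n. diffs c n * u ^ n) - (\<Sum>n. c n * u ^ n) = (\<Sum>n. fwd_diff d n / fact n * u ^ n)"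
    by (subst suminf_diff[OF diffs c]) (simp add: diffs_c c_def fwd_diff_def field_simps)
  moreover have "poisson_transform d = (\<lambda>v. exp (- v) * (\<Sum>n. c n * v ^ n))"
    using poisson_transform_exp_series[of d B] assms by (simp add: fun_eq_iff c_def)
  ultimately show ?thesis
    using poisson_transform_exp_series[of "fwd_diff d" "2 * B"] fwd_diff_bounded[of d B] assms
    by simp
qed

lemma poisson_weight_triangle_sum:
  "(\<Sum>(i, j)\<in>{(i, j). i + j < M}. poisson_weight u i * poisson_weight u j * d (i + j))
     = (\<Sum>n<M. poisson_weight (2 * u) n * d n)"
proof -
  have "(\<Sum>(i, j)\<in>{(i, j). i + j < M}. poisson_weight u i * poisson_weight u j * d (i + j))
      = (\<Sum>n<M. \<Sum>i\<le>n. poisson_weight u i * poisson_weight u (n - i) * d (i + (n - i)))"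
    by (rule sum.triangle_reindex)
  also have "\<dots> = (\<Sum>n<M. (\<Sum>i\<le>n. poisson_weight u i * poisson_weight u (n - i)) * d n)"
    by (simp add: sum_distrib_right)
  finally show ?thesis
    by (simp add: poisson_weight_convolution)
qed

lemma tendsto_poisson_double_sum:
  assumes d: "\<And>n. \<bar>d n\<bar> \<le> B" and u: "u \<ge> 0"
  shows "(\<lambda>M. \<Sum>i<M. \<Sum>j<M. poisson_weight u i * poisson_weight u j * d (i + j))
           \<longlonglongrightarrow> poisson_transform d (2 * u)"
proof -
  define f where "f = (\<lambda>(i, j). poisson_weight u i * poisson_weight u j * d (i + j))"
  define g where "g = (\<lambda>(i, j). poisson_weight u i * poisson_weight u j)"
  define Sq where "Sq M = {..<M} \<times> {..<M}" for M :: nat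
  define Tr where "Tr M = {(i, j). i + j < M}" for M :: nat
  have Tr_Sq: "Tr M \<subseteq> Sq M" and fin: "finite (Sq M)" for M
    by (auto simp: Sq_def Tr_def)
  have sum_f_Tr: "sum f (Tr M) = (\<Sum>n<M. poisson_weight (2 * u) n * d n)" for M
    unfolding f_def Tr_def by (rule poisson_weight_triangle_sum)
  have sum_g_Tr: "sum g (Tr M) = (\<Sum>n<M. poisson_weight (2 * u) n)" for M
    using poisson_weight_triangle_sum[of u "\<lambda>_. 1" M] unfolding g_def Tr_def by simp
  have sum_g_Sq: "sum g (Sq M) = (\<Sum>i<M. poisson_weight u i)\<^sup>2" for M
    by (simp add: g_def Sq_def power2_eq_square sum_product sum.cartesian_product)
  have corner: "norm (sum f (Sq M) - sum f (Tr M)) \<le> B * (sum g (Sq M) - sum g (Tr M))" for M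
  proof -
    have "norm (sum f (Sq M) - sum f (Tr M)) = \<bar>sum f (Sq M - Tr M)\<bar>"
      by (simp add: sum_diff[OF fin Tr_Sq])
    also have "\<dots> \<le> (\<Sum>p\<in>Sq M - Tr M. B * g p)"
      by (rule order_trans[OF sum_abs sum_mono])
        (auto simp: f_def g_def abs_mult poisson_weight_nonneg[OF u] d mult_right_mono mult.commute)
    also have "\<dots> = B * (sum g (Sq M) - sum g (Tr M))"
      by (simp add: sum_distrib_left[symmetric] sum_diff[OF fin Tr_Sq])
    finally show ?thesis .
  qed
  have partial_sums: "(\<lambda>M. \<Sum>n<M. poisson_weight v n) \<longlonglongrightarrow> 1" for v
    using poisson_weight_sums[of v] by (simp add: sums_def)
  have "(\<lambda>M. B * (sum g (Sq M) - sum g (Tr M))) \<longlonglongrightarrow> B * (1\<^sup>2 - 1)"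
    unfolding sum_g_Sq sum_g_Tr by (intro tendsto_intros partial_sums)
  then have "(\<lambda>M. sum f (Sq M) - sum f (Tr M)) \<longlonglongrightarrow> 0"
    by (intro Lim_null_comparison[OF always_eventually[OF allI[OF corner]]]) simp
  moreover have "(\<lambda>M. sum f (Tr M)) \<longlonglongrightarrow> poisson_transform d (2 * u)"
    unfolding sum_f_Tr poisson_transform_def
    by (rule summable_LIMSEQ[OF summable_poisson_weighted[OF d]])
  ultimately have "(\<lambda>M. sum f (Tr M) + (sum f (Sq M) - sum f (Tr M)))
      \<longlonglongrightarrow> poisson_transform d (2 * u) + 0"
    by (intro tendsto_intros)
  then show ?thesis
    by (simp add: f_def Sq_def sum.cartesian_product)
qed

lemma convex_nonneg_slope_bound:
  fixes f f' f'' :: "real \<Rightarrow> real"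
  assumes f': "\<And>u. u > 0 \<Longrightarrow> (f has_real_derivative f' u) (at u)"
    and f'': "\<And>u. u > 0 \<Longrightarrow> (f' has_real_derivative f'' u) (at u)"
    and convex: "\<And>u. u > 0 \<Longrightarrow> f'' u \<ge> 0"
    and "f (2 * s) \<ge> 0" and "s > 0"
  shows "- s * f' (2 * s) \<le> f s"
proof -
  obtain \<xi> where \<xi>: "s < \<xi>" "\<xi> < 2 * s" and mvt: "f (2 * s) - f s = s * f' \<xi>"
    using MVT2[of s "2 * s" f f'] f' \<open>s > 0\<close> by auto
  have "f' \<xi> \<le> f' (2 * s)"
  proof (rule DERIV_nonneg_imp_nondecreasing[of \<xi> "2 * s" f'])
    fix v assume "\<xi> \<le> v" "v \<le> 2 * s"
    then have "v > 0" using \<xi> \<open>s > 0\<close> by linarith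
    then show "\<exists>y. (f' has_real_derivative y) (at v) \<and> y \<ge> 0"
      using f'' convex by blast
  qed (use \<xi> in simp)
  then have "s * f' \<xi> \<le> s * f' (2 * s)"
    using \<open>s > 0\<close> by simp
  then show ?thesis
    using mvt \<open>f (2 * s) \<ge> 0\<close> by linarith
qed

section \<open>The random walk on a weighted graph\<close>

definition dkernel :: "('a \<Rightarrow> 'a \<Rightarrow> real) \<Rightarrow> nat \<Rightarrow> 'a \<Rightarrow> 'a \<Rightarrow> real" where
  "dkernel \<mu> n x y = pstep \<mu> n x y / vweight \<mu> y"

lemma trans_prob_eq_poisson_transform:
  "trans_prob \<mu> t x y = poisson_transform (\<lambda>n. pstep \<mu> n x y) t"
  by (simp add: trans_prob_def poisson_transform_def poisson_weight_def)

text \<open>Restricted to a vertex set T, which is always finite in the proofs below.\<close>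

definition dirichlet_form :: "('a \<Rightarrow> 'a \<Rightarrow> real) \<Rightarrow> 'a set \<Rightarrow> ('a \<Rightarrow> real) \<Rightarrow> real" where
  "dirichlet_form \<mu> T f = (\<Sum>y\<in>T. \<Sum>z\<in>T. \<mu> y z * (f y - f z)\<^sup>2) / 2"

lemma sum_mult_square_expand:
  fixes c :: "'p \<Rightarrow> real"
  shows "(\<Sum>p\<in>P. c p * (\<Sum>i\<in>I. w i * g i p)\<^sup>2)
       = (\<Sum>i\<in>I. \<Sum>j\<in>I. w i * w j * (\<Sum>p\<in>P. c p * (g i p * g j p)))"
proof -
  have "(\<Sum>p\<in>P. c p * (\<Sum>i\<in>I. w i * g i p)\<^sup>2)
      = (\<Sum>p\<in>P. \<Sum>i\<in>I. \<Sum>j\<in>I. w i * w j * (c p * (g i p * g j p)))"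
    by (simp add: power2_eq_square sum_product sum_distrib_left mult_ac)
  also have "\<dots> = (\<Sum>i\<in>I. \<Sum>j\<in>I. \<Sum>p\<in>P. w i * w j * (c p * (g i p * g j p)))"
    by (subst sum.swap) (simp add: sum.swap[of _ P])
  finally show ?thesis
    by (simp add: sum_distrib_left)
qed

locale wgraph =
  fixes \<mu> :: "'a \<Rightarrow> 'a \<Rightarrow> real"
  assumes weighted_graph: "weighted_graph \<mu>"
begin

lemma weight_sym: "\<mu> x y = \<mu> y x"
  using weighted_graph by (simp add: weighted_graph_def)

lemma weight_nonneg: "\<mu> x y \<ge> 0"
  using weighted_graph by (simp add: weighted_graph_def)

lemma finite_nbrs: "finite (nbrs \<mu> x)"
  using weighted_graph by (simp add: weighted_graph_def)

lemma adj_connected: "(x, y) \<in> (adj \<mu>)\<^sup>*"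
  using weighted_graph by (simp add: weighted_graph_def)

lemma mem_nbrs_iff: "y \<in> nbrs \<mu> x \<longleftrightarrow> (x, y) \<in> adj \<mu>"
  by (simp add: nbrs_def adj_def)

lemma weight_eq_0_if_not_nbr: "y \<notin> nbrs \<mu> x \<Longrightarrow> \<mu> x y = 0"
  using weight_nonneg[of x y] by (simp add: nbrs_def)

lemma vweight_pos: "vweight \<mu> x > 0"
proof -
  obtain y where "y \<noteq> x"
    using weighted_graph by (metis weighted_graph_def finite.simps UNIV_eq_I insert_iff)
  then obtain z where "(x, z) \<in> adj \<mu>"
    using adj_connected[of x y] by (metis converse_rtranclE)
  then have "z \<in> nbrs \<mu> x" "\<mu> x z > 0"
    by (simp_all add: mem_nbrs_iff adj_def)
  then show ?thesis
    unfolding vweight_def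
    by (intro sum_pos2[OF finite_nbrs]) (auto simp: nbrs_def less_imp_le)
qed

lemma vweight_neq_0 [simp]: "vweight \<mu> x \<noteq> 0"
  using vweight_pos[of x] by simp

lemma sum_weight_superset_nbrs:
  assumes "finite T" "nbrs \<mu> y \<subseteq> T"
  shows "(\<Sum>z\<in>T. \<mu> y z * f z) = (\<Sum>z\<in>nbrs \<mu> y. \<mu> y z * f z)"
  by (rule sum.mono_neutral_right[OF assms]) (auto simp: weight_eq_0_if_not_nbr)

lemma gdist_le: "(x, y) \<in> adj \<mu> ^^ n \<Longrightarrow> gdist \<mu> x y \<le> n"
  unfolding gdist_def by (rule Least_le)

lemma relpow_gdist: "(x, y) \<in> adj \<mu> ^^ gdist \<mu> x y"
proof -
  obtain n where "(x, y) \<in> adj \<mu> ^^ n"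
    using adj_connected[of x y] rtrancl_power by blast
  then show ?thesis
    unfolding gdist_def by (rule LeastI)
qed

lemma gdist_eq_0_iff [simp]: "gdist \<mu> x y = 0 \<longleftrightarrow> x = y"
  using relpow_gdist[of x y] gdist_le[of x x 0] by auto

lemma gdist_refl [simp]: "gdist \<mu> x x = 0"
  by simp

lemma mem_ball_g [simp]: "y \<in> ball_g \<mu> x r \<longleftrightarrow> real (gdist \<mu> x y) \<le> r"
  by (simp add: ball_g_def)

lemma ball_g_0 [simp]: "ball_g \<mu> x 0 = {x}"
  by auto

lemma ball_g_mono: "r \<le> r' \<Longrightarrow> ball_g \<mu> x r \<subseteq> ball_g \<mu> x r'"
  by auto

lemma ball_g_nbr_subset:
  assumes "y \<in> nbrs \<mu> x"
  shows "ball_g \<mu> y n \<subseteq> ball_g \<mu> x (Suc n)"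
proof
  fix z assume "z \<in> ball_g \<mu> y n"
  have "(x, z) \<in> adj \<mu> ^^ Suc (gdist \<mu> y z)"
    using assms relpow_gdist[of y z] by (metis relpow_Suc_I2 mem_nbrs_iff)
  then have "gdist \<mu> x z \<le> Suc (gdist \<mu> y z)"
    by (rule gdist_le)
  with \<open>z \<in> ball_g \<mu> y n\<close> show "z \<in> ball_g \<mu> x (Suc n)"
    by simp
qed

lemma nbrs_subset_ball_g:
  assumes "y \<in> ball_g \<mu> x n"
  shows "nbrs \<mu> y \<subseteq> ball_g \<mu> x (Suc n)"
proof
  fix z assume "z \<in> nbrs \<mu> y"
  then have "(x, z) \<in> adj \<mu> ^^ Suc (gdist \<mu> x y)"
    using relpow_gdist[of x y] by (auto simp: mem_nbrs_iff)
  then have "gdist \<mu> x z \<le> Suc (gdist \<mu> x y)"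
    by (rule gdist_le)
  with assms show "z \<in> ball_g \<mu> x (Suc n)"
    by simp
qed

lemma finite_ball_g_nat: "finite (ball_g \<mu> x (real n))"
proof (induction n)
  case 0
  then show ?case by simp
next
  case (Suc n)
  have "ball_g \<mu> x (Suc n) \<subseteq> ball_g \<mu> x n \<union> (\<Union>y\<in>ball_g \<mu> x n. nbrs \<mu> y)"
  proof
    fix z assume z: "z \<in> ball_g \<mu> x (Suc n)"
    show "z \<in> ball_g \<mu> x n \<union> (\<Union>y\<in>ball_g \<mu> x n. nbrs \<mu> y)"
    proof (cases "gdist \<mu> x z")
      case (Suc k)
      then obtain y where "(x, y) \<in> adj \<mu> ^^ k" "(y, z) \<in> adj \<mu>"
        using relpow_gdist[of x z] by auto
      then show ?thesis
        using z Suc gdist_le[of x y k] by (force simp: mem_nbrs_iff)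
    qed simp
  qed
  then show ?case
    using Suc.IH finite_nbrs by (auto intro: finite_subset)
qed

lemma finite_ball_g: "finite (ball_g \<mu> x r)"
proof -
  have "ball_g \<mu> x r \<subseteq> ball_g \<mu> x (real (nat \<lceil>r\<rceil>))"
    by (auto intro: order_trans[OF _ le_of_int_ceiling])
  then show ?thesis
    using finite_ball_g_nat finite_subset by blast
qed

lemma walk_relpow:
  assumes "\<forall>l<n. (p (i + l), p (Suc (i + l))) \<in> adj \<mu>"
  shows "(p i, p (i + n)) \<in> adj \<mu> ^^ n"
  unfolding relpow_fun_conv using assms by (intro exI[of _ "\<lambda>l. p (i + l)"]) simp

lemma shortest_walk_inj:
  assumes walk: "p 0 = x" "p (gdist \<mu> x y) = y" "\<forall>i<gdist \<mu> x y. (p i, p (Suc i)) \<in> adj \<mu>"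
  shows "inj_on p {..gdist \<mu> x y}"
proof (rule linorder_inj_onI')
  fix i j assume "i \<in> {..gdist \<mu> x y}" "j \<in> {..gdist \<mu> x y}" "i < j"
  define k where "k = gdist \<mu> x y"
  have "(x, p i) \<in> adj \<mu> ^^ i" "(p j, y) \<in> adj \<mu> ^^ (k - j)"
    using walk_relpow[of i p 0] walk_relpow[of "k - j" p j] walk \<open>i < j\<close> \<open>j \<in> _\<close>
    by (simp_all add: k_def)
  then have "p i = p j \<Longrightarrow> (x, y) \<in> adj \<mu> ^^ (i + (k - j))"
    by (auto simp: relpow_add)
  then show "p i \<noteq> p j"
    using gdist_le[of x y "i + (k - j)"] \<open>i < j\<close> \<open>j \<in> _\<close> by (auto simp: k_def)
qed

lemma pstep_nonneg: "pstep \<mu> n x y \<ge> 0"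
  by (induction n arbitrary: x)
    (auto intro!: sum_nonneg simp: weight_nonneg vweight_pos less_imp_le)

lemma pstep_eq_0_outside_ball: "y \<notin> ball_g \<mu> x n \<Longrightarrow> pstep \<mu> n x y = 0"
proof (induction n arbitrary: x)
  case (Suc n)
  then have "y \<notin> ball_g \<mu> z n" if "z \<in> nbrs \<mu> x" for z
    using ball_g_nbr_subset[OF that] by blast
  then show ?case
    using Suc.IH by simp
qed simp

lemma sum_pstep:
  assumes "finite S" "ball_g \<mu> x n \<subseteq> S"
  shows "(\<Sum>y\<in>S. pstep \<mu> n x y) = 1"
  using assms
proof (induction n arbitrary: x)
  case 0
  then show ?case by simp
next
  case (Suc n)
  have IH: "(\<Sum>y\<in>S. pstep \<mu> n z y) = 1" if "z \<in> nbrs \<mu> x" for z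
    using Suc ball_g_nbr_subset[OF that, of n] by blast
  have "(\<Sum>y\<in>S. pstep \<mu> (Suc n) x y)
      = (\<Sum>z\<in>nbrs \<mu> x. \<mu> x z / vweight \<mu> x * (\<Sum>y\<in>S. pstep \<mu> n z y))"
    by (simp add: sum_distrib_left sum.swap[of _ S])
  also have "\<dots> = (\<Sum>z\<in>nbrs \<mu> x. \<mu> x z) / vweight \<mu> x"
    by (simp add: IH sum_divide_distrib)
  also have "\<dots> = 1"
    using vweight_pos[of x] by (simp add: vweight_def)
  finally show ?case .
qed

lemma pstep_le_1: "pstep \<mu> n x y \<le> 1"
proof -
  have "pstep \<mu> n x y \<le> (\<Sum>v\<in>insert y (ball_g \<mu> x n). pstep \<mu> n x v)"
    by (rule member_le_sum) (auto simp: pstep_nonneg finite_ball_g)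
  also have "\<dots> = 1"
    by (rule sum_pstep) (auto simp: finite_ball_g)
  finally show ?thesis .
qed

lemma pstep_add:
  assumes "finite S" "ball_g \<mu> x n \<subseteq> S"
  shows "pstep \<mu> (n + k) x y = (\<Sum>z\<in>S. pstep \<mu> n x z * pstep \<mu> k z y)"
  using assms
proof (induction n arbitrary: x)
  case 0
  have "(\<Sum>z\<in>S. pstep \<mu> 0 x z * pstep \<mu> k z y) = (\<Sum>z\<in>S. if x = z then pstep \<mu> k z y else 0)"
    by (intro sum.cong) auto
  with 0 show ?case by simp
next
  case (Suc n)
  have IH: "pstep \<mu> (n + k) w y = (\<Sum>z\<in>S. pstep \<mu> n w z * pstep \<mu> k z y)" if "w \<in> nbrs \<mu> x" for w
    using Suc ball_g_nbr_subset[OF that, of n] by blast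
  have "pstep \<mu> (Suc n + k) x y
      = (\<Sum>w\<in>nbrs \<mu> x. \<mu> x w / vweight \<mu> x * (\<Sum>z\<in>S. pstep \<mu> n w z * pstep \<mu> k z y))"
    by (simp add: IH)
  also have "\<dots> = (\<Sum>z\<in>S. pstep \<mu> (Suc n) x z * pstep \<mu> k z y)"
    by (simp add: sum_distrib_left sum_distrib_right sum.swap[of _ S] mult.assoc)
  finally show ?case .
qed

lemma pstep_1: "pstep \<mu> 1 x y = \<mu> x y / vweight \<mu> x"
  using weight_eq_0_if_not_nbr[of y x] by (simp add: if_distrib finite_nbrs cong: if_cong)

lemma pstep_reversible: "vweight \<mu> x * pstep \<mu> n x y = vweight \<mu> y * pstep \<mu> n y x"
proof (induction n arbitrary: x y)
  case (Suc n)
  define S where "S = ball_g \<mu> x n \<union> nbrs \<mu> y"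
  have S: "finite S" "ball_g \<mu> x n \<subseteq> S" "nbrs \<mu> y \<subseteq> S"
    by (auto simp: S_def finite_ball_g finite_nbrs)
  have "vweight \<mu> x * pstep \<mu> (n + 1) x y
      = (\<Sum>z\<in>S. vweight \<mu> x * pstep \<mu> n x z * (\<mu> z y / vweight \<mu> z))"
    unfolding pstep_add[OF S(1,2)] pstep_1 by (simp add: sum_distrib_left mult.assoc)
  also have "\<dots> = (\<Sum>z\<in>S. \<mu> y z * pstep \<mu> n z x)"
  proof (rule sum.cong[OF refl])
    fix z
    have "vweight \<mu> x * pstep \<mu> n x z * (\<mu> z y / vweight \<mu> z)
        = vweight \<mu> z * pstep \<mu> n z x * (\<mu> z y / vweight \<mu> z)"
      by (simp only: Suc.IH)
    then show "vweight \<mu> x * pstep \<mu> n x z * (\<mu> z y / vweight \<mu> z) = \<mu> y z * pstep \<mu> n z x"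
      using vweight_pos[of z] by (simp add: weight_sym[of y])
  qed
  also have "\<dots> = vweight \<mu> y * pstep \<mu> (Suc n) y x"
    using vweight_pos[of y] by (simp add: sum_weight_superset_nbrs[OF S(1,3)] sum_distrib_left)
  finally show ?case by simp
qed simp

lemma dkernel_nonneg: "dkernel \<mu> n x y \<ge> 0"
  using pstep_nonneg vweight_pos[of y] by (simp add: dkernel_def)

lemma dkernel_bounded: "\<bar>dkernel \<mu> n x y\<bar> \<le> 1 / vweight \<mu> y"
  using pstep_le_1[of n x y] pstep_nonneg[of n x y] vweight_pos[of y]
  by (simp add: dkernel_def divide_right_mono)

lemma dkernel_sym: "dkernel \<mu> n x y = dkernel \<mu> n y x"
  using pstep_reversible[of x n y] vweight_pos[of x] vweight_pos[of y]
  by (simp add: dkernel_def field_simps)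

lemma dkernel_eq_0_outside_ball: "y \<notin> ball_g \<mu> x n \<Longrightarrow> dkernel \<mu> n x y = 0"
  by (simp add: dkernel_def pstep_eq_0_outside_ball)

lemma dkernel_add:
  assumes "finite U" "ball_g \<mu> x i \<subseteq> U"
  shows "(\<Sum>y\<in>U. vweight \<mu> y * (dkernel \<mu> i x y * dkernel \<mu> j y z)) = dkernel \<mu> (i + j) x z"
  by (simp add: dkernel_def pstep_add[OF assms] sum_divide_distrib)

lemma sum_weight_dkernel:
  assumes "finite T" "nbrs \<mu> y \<subseteq> T"
  shows "(\<Sum>z\<in>T. \<mu> y z * dkernel \<mu> j z w) = vweight \<mu> y * dkernel \<mu> (Suc j) y w"
proof -
  have "(\<Sum>z\<in>T. \<mu> y z * dkernel \<mu> j z w) = (\<Sum>z\<in>nbrs \<mu> y. \<mu> y z * pstep \<mu> j z w) / vweight \<mu> w"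
    unfolding dkernel_def sum_weight_superset_nbrs[OF assms] by (simp add: sum_divide_distrib)
  then show ?thesis
    by (simp add: dkernel_def sum_distrib_left[symmetric] sum_divide_distrib[symmetric])
qed

lemma heat_kernel_eq_poisson_dkernel:
  "heat_kernel \<mu> t x y = poisson_transform (\<lambda>n. dkernel \<mu> n x y) t"
proof -
  have "summable (\<lambda>n. poisson_weight t n * pstep \<mu> n x y)"
    by (rule summable_poisson_weighted[of _ 1]) (simp add: pstep_nonneg pstep_le_1)
  then show ?thesis
    by (simp add: heat_kernel_def trans_prob_eq_poisson_transform poisson_transform_def dkernel_def
        suminf_divide[symmetric])
qed

lemma heat_kernel_nonneg: "t \<ge> 0 \<Longrightarrow> heat_kernel \<mu> t x y \<ge> 0"
  unfolding heat_kernel_eq_poisson_dkernel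
  by (intro poisson_transform_nonneg[of _ "1 / vweight \<mu> y"] dkernel_bounded dkernel_nonneg)

lemma sum_trans_prob_le_1:
  assumes "finite B" "t \<ge> 0"
  shows "(\<Sum>y\<in>B. trans_prob \<mu> t x y) \<le> 1"
proof -
  have mass: "(\<Sum>y\<in>B. pstep \<mu> n x y) \<le> 1" for n
  proof -
    have "(\<Sum>y\<in>B. pstep \<mu> n x y) \<le> (\<Sum>y\<in>B \<union> ball_g \<mu> x n. pstep \<mu> n x y)"
      by (rule sum_mono2) (auto simp: assms finite_ball_g pstep_nonneg)
    also have "\<dots> = 1"
      by (rule sum_pstep) (auto simp: assms finite_ball_g)
    finally show ?thesis .
  qed
  have "(\<Sum>y\<in>B. trans_prob \<mu> t x y) = poisson_transform (\<lambda>n. \<Sum>y\<in>B. pstep \<mu> n x y) t"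
    by (simp add: trans_prob_eq_poisson_transform poisson_transform_sum[of B _ 1]
        pstep_nonneg pstep_le_1)
  also have "\<dots> \<le> poisson_transform (\<lambda>_. 1) t"
    using mass assms(2)
    by (intro poisson_transform_mono[of _ 1 _ 1]) (auto simp: sum_nonneg pstep_nonneg)
  finally show ?thesis
    by simp
qed

section \<open>Energy of the heat kernel\<close>

lemma dkernel_mult_sum_weight_ball:
  fixes R :: nat
  assumes "i < R"
  shows "dkernel \<mu> i x y * (\<Sum>z\<in>ball_g \<mu> x R. \<mu> y z * f z)
       = dkernel \<mu> i x y * (\<Sum>z\<in>nbrs \<mu> y. \<mu> y z * f z)"
proof (cases "y \<in> ball_g \<mu> x i")
  case True
  then have "nbrs \<mu> y \<subseteq> ball_g \<mu> x R"
    using nbrs_subset_ball_g[of y x i] assms by force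
  then show ?thesis
    by (simp add: sum_weight_superset_nbrs finite_ball_g)
qed (simp add: dkernel_eq_0_outside_ball)

lemma dkernel_inner:
  fixes R :: nat
  assumes "i \<le> R"
  shows "(\<Sum>y\<in>ball_g \<mu> x R. vweight \<mu> y * (dkernel \<mu> i x y * dkernel \<mu> j x y))
       = dkernel \<mu> (i + j) x x"
proof -
  have "(\<Sum>y\<in>ball_g \<mu> x R. vweight \<mu> y * (dkernel \<mu> i x y * dkernel \<mu> j x y))
      = (\<Sum>y\<in>ball_g \<mu> x R. vweight \<mu> y * (dkernel \<mu> i x y * dkernel \<mu> j y x))"
    by (simp only: dkernel_sym[of j x])
  also have "\<dots> = dkernel \<mu> (i + j) x x"
    using assms by (intro dkernel_add) (auto simp: finite_ball_g)
  finally show ?thesis .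
qed

lemma dkernel_energy_diag:
  fixes R :: nat
  assumes "i < R"
  shows "(\<Sum>y\<in>ball_g \<mu> x R. \<Sum>z\<in>ball_g \<mu> x R. \<mu> y z * (dkernel \<mu> i x y * dkernel \<mu> j x y))
       = dkernel \<mu> (i + j) x x"
proof -
  define B where "B = ball_g \<mu> x R"
  have "(\<Sum>y\<in>B. \<Sum>z\<in>B. \<mu> y z * (dkernel \<mu> i x y * dkernel \<mu> j x y))
      = (\<Sum>y\<in>B. dkernel \<mu> j x y * (dkernel \<mu> i x y * (\<Sum>z\<in>B. \<mu> y z * 1)))"
    by (simp add: sum_distrib_left sum_distrib_right mult_ac)
  also have "\<dots> = (\<Sum>y\<in>B. vweight \<mu> y * (dkernel \<mu> i x y * dkernel \<mu> j x y))"
    unfolding B_def dkernel_mult_sum_weight_ball[OF assms] by (simp add: vweight_def mult_ac)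
  finally show ?thesis
    using dkernel_inner[of i R x j] assms by (simp add: B_def)
qed

lemma dkernel_energy_cross:
  fixes R :: nat
  assumes "i < R"
  shows "(\<Sum>y\<in>ball_g \<mu> x R. \<Sum>z\<in>ball_g \<mu> x R. \<mu> y z * (dkernel \<mu> i x y * dkernel \<mu> j x z))
       = dkernel \<mu> (Suc (i + j)) x x"
proof -
  define B where "B = ball_g \<mu> x R"
  have "(\<Sum>y\<in>B. \<Sum>z\<in>B. \<mu> y z * (dkernel \<mu> i x y * dkernel \<mu> j x z))
      = (\<Sum>y\<in>B. dkernel \<mu> i x y * (\<Sum>z\<in>B. \<mu> y z * dkernel \<mu> j z x))"
    by (simp add: sum_distrib_left dkernel_sym[of j x] mult_ac)
  also have "\<dots> = (\<Sum>y\<in>B. vweight \<mu> y * (dkernel \<mu> i x y * dkernel \<mu> (Suc j) x y))"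
    unfolding B_def dkernel_mult_sum_weight_ball[OF assms]
    by (simp add: sum_weight_dkernel finite_nbrs dkernel_sym[of "Suc j" x] mult_ac)
  finally show ?thesis
    using dkernel_inner[of i R x "Suc j"] assms by (simp add: B_def)
qed

lemma dkernel_energy:
  fixes R :: nat
  assumes "i < R"
  shows "(\<Sum>y\<in>ball_g \<mu> x R. \<Sum>z\<in>ball_g \<mu> x R. \<mu> y z *
            ((dkernel \<mu> i x y - dkernel \<mu> i x z) * (dkernel \<mu> j x y - dkernel \<mu> j x z)))
       = 2 * (dkernel \<mu> (i + j) x x - dkernel \<mu> (Suc (i + j)) x x)"
proof -
  define B where "B = ball_g \<mu> x R"
  define g where "g = dkernel \<mu> i x"
  define h where "h = dkernel \<mu> j x"
  have swap: "(\<Sum>y\<in>B. \<Sum>z\<in>B. \<mu> y z * F z y) = (\<Sum>y\<in>B. \<Sum>z\<in>B. \<mu> y z * F y z)" for F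
    by (subst sum.swap) (simp add: weight_sym)
  have "(\<Sum>y\<in>B. \<Sum>z\<in>B. \<mu> y z * ((g y - g z) * (h y - h z)))
      = (\<Sum>y\<in>B. \<Sum>z\<in>B. \<mu> y z * (g y * h y)) - (\<Sum>y\<in>B. \<Sum>z\<in>B. \<mu> y z * (g y * h z))
        - (\<Sum>y\<in>B. \<Sum>z\<in>B. \<mu> y z * (g z * h y)) + (\<Sum>y\<in>B. \<Sum>z\<in>B. \<mu> y z * (g z * h z))"
    by (simp add: sum_subtractf[symmetric] sum.distrib[symmetric] algebra_simps)
  also have "\<dots> = 2 * ((\<Sum>y\<in>B. \<Sum>z\<in>B. \<mu> y z * (g y * h y))
      - (\<Sum>y\<in>B. \<Sum>z\<in>B. \<mu> y z * (g y * h z)))"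
    using swap[of "\<lambda>z y. g z * h y"] swap[of "\<lambda>z y. g z * h z"] by simp
  finally show ?thesis
    using dkernel_energy_diag[OF assms, of x j] dkernel_energy_cross[OF assms, of x j]
    by (simp add: B_def g_def h_def)
qed

lemma dirichlet_form_dkernel_sum:
  fixes R :: nat
  assumes "M \<le> R"
  shows "dirichlet_form \<mu> (ball_g \<mu> x R) (\<lambda>y. \<Sum>i<M. w i * dkernel \<mu> i x y)
       = (\<Sum>i<M. \<Sum>j<M. w i * w j * (dkernel \<mu> (i + j) x x - dkernel \<mu> (Suc (i + j)) x x))"
proof -
  define B where "B = ball_g \<mu> x R"
  define g where "g i = (\<lambda>(y, z). dkernel \<mu> i x y - dkernel \<mu> i x z)" for i
  have "(\<Sum>y\<in>B. \<Sum>z\<in>B. \<mu> y z * ((\<Sum>i<M. w i * dkernel \<mu> i x y) - (\<Sum>i<M. w i * dkernel \<mu> i x z))\<^sup>2)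
      = (\<Sum>p\<in>B \<times> B. case_prod \<mu> p * (\<Sum>i<M. w i * g i p)\<^sup>2)"
    unfolding sum.cartesian_product
    by (intro sum.cong refl) (auto simp: g_def right_diff_distrib sum_subtractf)
  also have "\<dots> = (\<Sum>i<M. \<Sum>j<M. w i * w j * (\<Sum>p\<in>B \<times> B. case_prod \<mu> p * (g i p * g j p)))"
    by (rule sum_mult_square_expand)
  also have "\<dots> = (\<Sum>i<M. \<Sum>j<M. w i * w j *
      (2 * (dkernel \<mu> (i + j) x x - dkernel \<mu> (Suc (i + j)) x x)))"
  proof (intro sum.cong refl)
    fix i j assume "i \<in> {..<M}"
    have "(\<Sum>p\<in>B \<times> B. case_prod \<mu> p * (g i p * g j p))
        = (\<Sum>y\<in>B. \<Sum>z\<in>B. \<mu> y z *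
            ((dkernel \<mu> i x y - dkernel \<mu> i x z) * (dkernel \<mu> j x y - dkernel \<mu> j x z)))"
      unfolding sum.cartesian_product by (intro sum.cong refl) (auto simp: g_def)
    also have "\<dots> = 2 * (dkernel \<mu> (i + j) x x - dkernel \<mu> (Suc (i + j)) x x)"
      unfolding B_def using \<open>i \<in> {..<M}\<close> assms by (intro dkernel_energy) simp
    finally show "w i * w j * (\<Sum>p\<in>B \<times> B. case_prod \<mu> p * (g i p * g j p))
        = w i * w j * (2 * (dkernel \<mu> (i + j) x x - dkernel \<mu> (Suc (i + j)) x x))"
      by simp
  qed
  also have "\<dots> = 2 * (\<Sum>i<M. \<Sum>j<M. w i * w j *
      (dkernel \<mu> (i + j) x x - dkernel \<mu> (Suc (i + j)) x x))"
    by (simp add: sum_distrib_left mult_ac)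
  finally show ?thesis
    by (simp add: dirichlet_form_def B_def)
qed

lemma second_difference_dkernel_form_nonneg:
  "(\<Sum>i<M. \<Sum>j<M. w i * w j * fwd_diff (fwd_diff (\<lambda>n. dkernel \<mu> n x x)) (i + j)) \<ge> 0"
proof -
  define B where "B = ball_g \<mu> x M"
  define g where "g i y = dkernel \<mu> i x y - dkernel \<mu> (Suc i) x y" for i y
  have inner: "(\<Sum>y\<in>B. vweight \<mu> y * (g i y * g j y))
      = fwd_diff (fwd_diff (\<lambda>n. dkernel \<mu> n x x)) (i + j)" if "i < M" for i j
    using that dkernel_inner[where i=i and R=M and j=j]
      dkernel_inner[where i=i and R=M and j="Suc j"] dkernel_inner[where i="Suc i" and R=M and j=j]
      dkernel_inner[where i="Suc i" and R=M and j="Suc j"]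
    by (simp add: B_def g_def fwd_diff_def algebra_simps sum.distrib sum_subtractf)
  have "0 \<le> (\<Sum>y\<in>B. vweight \<mu> y * (\<Sum>i<M. w i * g i y)\<^sup>2)"
    by (intro sum_nonneg mult_nonneg_nonneg) (auto simp: vweight_pos less_imp_le)
  also have "\<dots> = (\<Sum>i<M. \<Sum>j<M. w i * w j * fwd_diff (fwd_diff (\<lambda>n. dkernel \<mu> n x x)) (i + j))"
    by (simp add: sum_mult_square_expand inner)
  finally show ?thesis .
qed

text \<open>Convexity of u |-> q_u(x,x).\<close>

lemma poisson_second_difference_dkernel_nonneg:
  assumes "u > 0"
  shows "poisson_transform (fwd_diff (fwd_diff (\<lambda>n. dkernel \<mu> n x x))) u \<ge> 0"
proof -
  have bounded: "\<bar>fwd_diff (fwd_diff (\<lambda>n. dkernel \<mu> n x x)) n\<bar> \<le> 2 * (2 * (1 / vweight \<mu> x))" for n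
    by (intro fwd_diff_bounded dkernel_bounded)
  have "(\<lambda>M. \<Sum>i<M. \<Sum>j<M. poisson_weight (u / 2) i * poisson_weight (u / 2) j
      * fwd_diff (fwd_diff (\<lambda>n. dkernel \<mu> n x x)) (i + j))
      \<longlonglongrightarrow> poisson_transform (fwd_diff (fwd_diff (\<lambda>n. dkernel \<mu> n x x))) u"
    using tendsto_poisson_double_sum[OF bounded, of "u / 2"] assms by simp
  then show ?thesis
    by (rule LIMSEQ_le_const) (use second_difference_dkernel_form_nonneg in auto)
qed

lemma heat_kernel_energy_bound:
  assumes "s > 0"
  shows "- s * poisson_transform (fwd_diff (\<lambda>n. dkernel \<mu> n x x)) (2 * s) \<le> heat_kernel \<mu> s x x"
proof -
  define a where "a = (\<lambda>n. dkernel \<mu> n x x)"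
  have a: "\<bar>a n\<bar> \<le> 1 / vweight \<mu> x" for n
    unfolding a_def by (rule dkernel_bounded)
  have "- s * poisson_transform (fwd_diff a) (2 * s) \<le> poisson_transform a s"
  proof (rule convex_nonneg_slope_bound)
    show "(poisson_transform a has_real_derivative poisson_transform (fwd_diff a) u) (at u)" for u
      using a by (rule poisson_transform_has_derivative)
    show "(poisson_transform (fwd_diff a) has_real_derivative
        poisson_transform (fwd_diff (fwd_diff a)) u) (at u)" for u
      using fwd_diff_bounded[OF a] by (rule poisson_transform_has_derivative)
    show "poisson_transform (fwd_diff (fwd_diff a)) u \<ge> 0" if "u > 0" for u
      unfolding a_def using that by (rule poisson_second_difference_dkernel_nonneg)
    show "poisson_transform a (2 * s) \<ge> 0"
      using a assms by (intro poisson_transform_nonneg) (auto simp: a_def dkernel_nonneg)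
  qed (use assms in auto)
  then show ?thesis
    by (simp add: a_def heat_kernel_eq_poisson_dkernel)
qed

text \<open>A walk without repeated vertices traverses each edge once, while the double sum in the
  Dirichlet form counts every edge in both orientations.\<close>

lemma sum_walk_le_dirichlet_form:
  assumes "finite T" "inj_on p {..k}" "p ` {..k} \<subseteq> T"
  shows "(\<Sum>i<k. \<mu> (p i) (p (Suc i)) * (f (p i) - f (p (Suc i)))\<^sup>2) \<le> dirichlet_form \<mu> T f"
proof -
  define F where "F = (\<lambda>(y, z). \<mu> y z * (f y - f z)\<^sup>2)"
  define fwd where "fwd i = (p i, p (Suc i))" for i
  define bwd where "bwd i = (p (Suc i), p i)" for i
  have inj: "inj_on fwd {..<k}" "inj_on bwd {..<k}"
    using assms(2) by (auto simp: inj_on_def fwd_def bwd_def)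
  have "fwd i \<noteq> bwd j" if "i < k" "j < k" for i j
  proof
    assume "fwd i = bwd j"
    then have "i = Suc j" "Suc i = j"
      using inj_onD[OF assms(2)] that by (auto simp: fwd_def bwd_def)
    then show False
      by simp
  qed
  then have "fwd ` {..<k} \<inter> bwd ` {..<k} = {}"
    by blast
  moreover have "fwd ` {..<k} \<union> bwd ` {..<k} \<subseteq> T \<times> T"
    using assms(3) by (auto simp: fwd_def bwd_def)
  moreover have "F e \<ge> 0" for e
    by (auto simp: F_def weight_nonneg split: prod.split)
  ultimately have "sum F (fwd ` {..<k}) + sum F (bwd ` {..<k}) \<le> sum F (T \<times> T)"
    using assms(1) by (simp add: sum.union_disjoint[symmetric] sum_mono2)
  moreover have "sum F (bwd ` {..<k}) = sum F (fwd ` {..<k})"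
    unfolding sum.reindex[OF inj(1)] sum.reindex[OF inj(2)]
    by (simp add: F_def fwd_def bwd_def weight_sym power2_commute)
  ultimately show ?thesis
    unfolding sum.reindex[OF inj(1)] dirichlet_form_def sum.cartesian_product
    by (simp add: F_def fwd_def)
qed

end

section \<open>The on-diagonal bound\<close>

lemma bound_from_volume_inequality:
  fixes q V r A :: real
  assumes r: "r > 0" and A: "A > 0" and q: "q \<ge> 0" and V: "V \<ge> r\<^sup>2 / A"
    and ineq: "V * q \<le> 1 + V * sqrt (q / (2 * r\<^sup>2))"
  shows "q \<le> 2 * max A 1 / r\<^sup>2"
proof -
  define v where "v = r * sqrt (q / 2)"
  have "V > 0"
    using V r A by (smt (verit) divide_pos_pos zero_less_power)
  have "sqrt (q / (2 * r\<^sup>2)) = sqrt (q / 2) / r"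
    using r by (simp add: real_sqrt_divide real_sqrt_mult)
  then have v: "v \<ge> 0" "q * r\<^sup>2 = 2 * v\<^sup>2" "r\<^sup>2 * sqrt (q / (2 * r\<^sup>2)) = v"
    using r q by (simp_all add: v_def power_mult_distrib power2_eq_square)
  have "q \<le> 1 / V + sqrt (q / (2 * r\<^sup>2))"
    using ineq \<open>V > 0\<close> by (simp add: field_simps)
  also have "1 / V \<le> A / r\<^sup>2"
    using V \<open>V > 0\<close> A r by (simp add: field_simps)
  finally have "q * r\<^sup>2 \<le> A + v"
    using r v(3) by (simp add: field_simps)
  then have "2 * v\<^sup>2 \<le> A + v"
    using v(2) by simp
  then have "v\<^sup>2 \<le> max A 1"
  proof (cases "v \<le> 1")
    case True
    then show ?thesis
      using v(1) power_le_one[of v 2] by linarith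
  next
    case False
    then have "v \<le> v\<^sup>2"
      by (simp add: power2_eq_square)
    with \<open>2 * v\<^sup>2 \<le> A + v\<close> show ?thesis
      by simp
  qed
  then show ?thesis
    using v(2) r by (simp add: field_simps)
qed

locale wgraph_ge1 = wgraph +
  assumes weight_ge_1: "(x, y) \<in> adj \<mu> \<Longrightarrow> \<mu> x y \<ge> 1"
begin

lemma path_poincare:
  assumes "finite T" "ball_g \<mu> x (gdist \<mu> x y) \<subseteq> T"
  shows "(f x - f y)\<^sup>2 \<le> gdist \<mu> x y * dirichlet_form \<mu> T f"
proof -
  define k where "k = gdist \<mu> x y"
  obtain p where walk: "p 0 = x" "p k = y" "\<forall>i<k. (p i, p (Suc i)) \<in> adj \<mu>"
    using relpow_gdist[of x y] unfolding k_def relpow_fun_conv by blast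
  define D where "D i = f (p i) - f (p (Suc i))" for i
  have "f x - f y = (\<Sum>i<k. D i)"
    using sum_lessThan_telescope'[of "\<lambda>i. f (p i)" k] walk by (simp add: D_def)
  then have cauchy_schwarz: "(f x - f y)\<^sup>2 \<le> k * (\<Sum>i<k. (D i)\<^sup>2)"
    using sum_squared_le_sum_of_squares[of D "{..<k}"] by (simp add: mult.commute)
  have "(\<Sum>i<k. (D i)\<^sup>2) \<le> (\<Sum>i<k. \<mu> (p i) (p (Suc i)) * (D i)\<^sup>2)"
    using walk weight_ge_1 by (intro sum_mono) (simp add: mult_le_cancel_right1)
  also have "\<dots> \<le> dirichlet_form \<mu> T f"
    unfolding D_def
  proof (rule sum_walk_le_dirichlet_form[OF assms(1)])
    show "inj_on p {..k}"
      using shortest_walk_inj walk by (simp add: k_def)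
    have "p i \<in> ball_g \<mu> x k" if "i \<le> k" for i
      using walk_relpow[of i p 0] walk that gdist_le[of x "p i" i] by simp
    then show "p ` {..k} \<subseteq> T"
      using assms(2) by (auto simp: k_def)
  qed
  finally show ?thesis
    using cauchy_schwarz by (simp add: k_def order_trans mult_left_mono)
qed

lemma heat_kernel_oscillation:
  assumes "s > 0"
  shows "(heat_kernel \<mu> s x x - heat_kernel \<mu> s x y)\<^sup>2 \<le> gdist \<mu> x y * (heat_kernel \<mu> s x x / s)"
proof -
  define k where "k = gdist \<mu> x y"
  define a where "a = (\<lambda>n. dkernel \<mu> n x x)"
  txt \<open>Truncating the Poisson series at M keeps every vertex sum inside the finite ball of
    radius M + d(x,y); the estimate then passes to the limit.\<close>
  define h where "h M z = (\<Sum>i<M. poisson_weight s i * dkernel \<mu> i x z)" for M z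
  define E where
    "E M = (\<Sum>i<M. \<Sum>j<M. poisson_weight s i * poisson_weight s j * - fwd_diff a (i + j))" for M
  have truncated: "(h M x - h M y)\<^sup>2 \<le> k * E M" for M
  proof -
    have "(h M x - h M y)\<^sup>2 \<le> k * dirichlet_form \<mu> (ball_g \<mu> x (M + k)) (h M)"
      using path_poincare[of "ball_g \<mu> x (M + k)" x y "h M"] ball_g_mono[of k "M + k" x]
      by (simp add: finite_ball_g k_def)
    also have "dirichlet_form \<mu> (ball_g \<mu> x (M + k)) (h M) = E M"
      unfolding h_def E_def a_def by (subst dirichlet_form_dkernel_sum) (simp_all add: fwd_diff_def)
    finally show ?thesis .
  qed
  have "(\<lambda>M. h M z) \<longlonglongrightarrow> heat_kernel \<mu> s x z" for z
    unfolding h_def heat_kernel_eq_poisson_dkernel poisson_transform_def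
    by (rule summable_LIMSEQ[OF summable_poisson_weighted]) (rule dkernel_bounded)
  then have lim_lhs: "(\<lambda>M. (h M x - h M y)\<^sup>2) \<longlonglongrightarrow> (heat_kernel \<mu> s x x - heat_kernel \<mu> s x y)\<^sup>2"
    by (intro tendsto_intros)
  have a: "\<bar>a n\<bar> \<le> 1 / vweight \<mu> x" for n
    unfolding a_def by (rule dkernel_bounded)
  have "E \<longlonglongrightarrow> poisson_transform (\<lambda>n. - fwd_diff a n) (2 * s)"
    unfolding E_def using assms fwd_diff_bounded[OF a]
    by (intro tendsto_poisson_double_sum[of _ "2 * (1 / vweight \<mu> x)"]) auto
  then have lim_rhs: "(\<lambda>M. k * E M) \<longlonglongrightarrow> k * - poisson_transform (fwd_diff a) (2 * s)"
    using poisson_transform_uminus[OF fwd_diff_bounded[OF a]] by (intro tendsto_intros) simp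
  have "(heat_kernel \<mu> s x x - heat_kernel \<mu> s x y)\<^sup>2
      \<le> k * - poisson_transform (fwd_diff a) (2 * s)"
    by (rule LIMSEQ_le[OF lim_lhs lim_rhs]) (use truncated in auto)
  also have "\<dots> \<le> k * (heat_kernel \<mu> s x x / s)"
    using heat_kernel_energy_bound[OF assms, of x] assms
    by (intro mult_left_mono) (simp_all add: a_def field_simps)
  finally show ?thesis
    by (simp add: k_def)
qed

lemma heat_kernel_diag_le_of_vol:
  assumes r: "r > 0" and A: "A > 0" and V: "vol \<mu> x r \<ge> r\<^sup>2 / A"
  shows "heat_kernel \<mu> (2 * r ^ 3) x x \<le> 2 * max A 1 / r\<^sup>2"
proof -
  define s where "s = 2 * r ^ 3"
  define q where "q = heat_kernel \<mu> s x x"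
  define e where "e = sqrt (q / (2 * r\<^sup>2))"
  have "s > 0"
    using r by (simp add: s_def)
  have "q \<ge> 0"
    using \<open>s > 0\<close> by (simp add: q_def heat_kernel_nonneg)
  have near_diag: "q \<le> heat_kernel \<mu> s x y + e" if "y \<in> ball_g \<mu> x r" for y
  proof -
    have "(q - heat_kernel \<mu> s x y)\<^sup>2 \<le> gdist \<mu> x y * (q / s)"
      unfolding q_def using \<open>s > 0\<close> by (rule heat_kernel_oscillation)
    also have "\<dots> \<le> r * (q / s)"
      using that \<open>q \<ge> 0\<close> \<open>s > 0\<close> by (intro mult_right_mono) simp_all
    also have "\<dots> = q / (2 * r\<^sup>2)"
      using r by (simp add: s_def power2_eq_square power3_eq_cube)
    finally have "q - heat_kernel \<mu> s x y \<le> e"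
      unfolding e_def by (rule real_le_rsqrt)
    then show ?thesis
      by simp
  qed
  have "vol \<mu> x r * q \<le> (\<Sum>y\<in>ball_g \<mu> x r. vweight \<mu> y * (heat_kernel \<mu> s x y + e))"
    unfolding vol_def sum_distrib_right
    by (rule sum_mono) (use near_diag vweight_pos in \<open>auto intro: mult_left_mono less_imp_le\<close>)
  also have "\<dots> = (\<Sum>y\<in>ball_g \<mu> x r. trans_prob \<mu> s x y + vweight \<mu> y * e)"
    by (simp add: heat_kernel_def distrib_left)
  also have "\<dots> = (\<Sum>y\<in>ball_g \<mu> x r. trans_prob \<mu> s x y) + vol \<mu> x r * e"
    by (simp add: vol_def sum.distrib sum_distrib_right)
  also have "\<dots> \<le> 1 + vol \<mu> x r * e"
    using sum_trans_prob_le_1[OF finite_ball_g] \<open>s > 0\<close> by simp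
  finally have "vol \<mu> x r * q \<le> 1 + vol \<mu> x r * e" .
  then show ?thesis
    using bound_from_volume_inequality[OF r A \<open>q \<ge> 0\<close> V] by (simp add: q_def s_def e_def)
qed

end

theorem corollary4p2:
  fixes \<mu> :: "'a \<Rightarrow> 'a \<Rightarrow> real" and x :: 'a and r A t :: real
  assumes "weighted_graph \<mu>"
    and "\<And>y z. (y, z) \<in> adj \<mu> \<Longrightarrow> \<mu> y z \<ge> 1"
    and "r > 0" and "A > 0"
    and "vol \<mu> x r \<ge> r ^ 2 / A"
    and "t = r ^ 3"
  shows "heat_kernel \<mu> (2 * t) x x \<le> 2 * max A 1 / r ^ 2
       \<and> 2 * max A 1 / r ^ 2 = 2 * max A 1 / t powr (2 / 3)"
proof -
  interpret wgraph_ge1 \<mu>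
    using assms(1,2) by unfold_locales
  have "t powr (2 / 3) = (r powr 3) powr (2 / 3)"
    using assms(3,6) powr_realpow[of r 3] by simp
  also have "\<dots> = r powr 2"
    by (simp only: powr_powr) simp
  also have "\<dots> = r ^ 2"
    using assms(3) by simp
  finally have "t powr (2 / 3) = r ^ 2" .
  then show ?thesis
    using heat_kernel_diag_le_of_vol[OF assms(3-5)] assms(6) by simp
qed

end
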